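(* Every admissible Poisson algebra $(\mathcal{P},\cdot)$ is power associative: for every $X\in\mathcal{P}$, defining $X^1=X$ and $X^{i+1}=X\cdot X^i$, one has $X^i\cdot X^j=X^{i+j}$ for all $i,j\ge 1$; in particular the subalgebra generated by any single element is associative.
   Context: $\mathbb{K}$ is a field of characteristic different from $2$ and $3$. For a bilinear product $\cdot$ on $\mathcal{P}$, its associator is $A(X,Y,Z)=(X\cdot Y)\cdot Z-X\cdot(Y\cdot Z)$. An admissible Poisson algebra is a $\mathbb{K}$-vector space $\mathcal{P}$ with a bilinear product $\cdot$ (not assumed associative) satisfying, for all $X,Y,Z$, $3A(X,Y,Z)=(X\cdot Z)\cdot Y+(Y\cdot Z)\cdot X-(Y\cdot X)\cdot Z-(Z\cdot X)\cdot Y$. *)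

theory Defs
  imports Main "HOL.Vector_Spaces"
begin

definition bilinear_prod :: "('k::field \<Rightarrow> 'p::ab_group_add \<Rightarrow> 'p) \<Rightarrow> ('p \<Rightarrow> 'p \<Rightarrow> 'p) \<Rightarrow> bool" where
  "bilinear_prod scale m \<longleftrightarrow>
     (\<forall>x. Vector_Spaces.linear scale scale (m x)) \<and>
     (\<forall>y. Vector_Spaces.linear scale scale (\<lambda>x. m x y))"

definition associator :: "('p \<Rightarrow> 'p \<Rightarrow> 'p) \<Rightarrow> 'p \<Rightarrow> 'p \<Rightarrow> 'p \<Rightarrow> 'p::ab_group_add" where
  "associator m X Y Z = m (m X Y) Z - m X (m Y Z)"

definition admissible_poisson :: "('k::field \<Rightarrow> 'p::ab_group_add \<Rightarrow> 'p) \<Rightarrow> ('p \<Rightarrow> 'p \<Rightarrow> 'p) \<Rightarrow> bool" where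
  "admissible_poisson scale m \<longleftrightarrow>
     vector_space scale \<and> bilinear_prod scale m \<and>
     (\<forall>X Y Z. scale 3 (associator m X Y Z) =
        m (m X Z) Y + m (m Y Z) X - m (m Y X) Z - m (m Z X) Y)"

text \<open>Powers: ppow m X i = X^i for i \<ge> 1, with X^1 = X and X^(i+1) = X \<cdot> X^i.
  (The value at 0 is unspecified and never used.)\<close>
fun ppow :: "('p \<Rightarrow> 'p \<Rightarrow> 'p) \<Rightarrow> 'p \<Rightarrow> nat \<Rightarrow> 'p" where
  "ppow m X (Suc 0) = X"
| "ppow m X (Suc (Suc n)) = m X (ppow m X (Suc n))"

definition gen_subalg :: "('k::field \<Rightarrow> 'p::ab_group_add \<Rightarrow> 'p) \<Rightarrow> ('p \<Rightarrow> 'p \<Rightarrow> 'p) \<Rightarrow> 'p \<Rightarrow> 'p set" where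
  "gen_subalg scale m X =
     \<Inter>{S. module.subspace scale S \<and> X \<in> S \<and> (\<forall>a\<in>S. \<forall>b\<in>S. m a b \<in> S)}"

end

theory Submission
  imports Defs "HOL-Computational_Algebra.Primes"
begin

text \<open>Split the product into its symmetric part \<open>x \<circ> y = xy + yx\<close> and its commutator
  \<open>[x, y] = xy - yx\<close>. Since 3 is invertible, the admissibility identity makes \<open>\<circ>\<close> associative
  and every \<open>[a, -]\<close> a derivation of \<open>\<circ>\<close>. Hence centralisers are closed under \<open>\<circ>\<close>, and the
  \<open>\<circ>\<close>-subalgebra generated by \<open>X\<close> is commutative for the original product. There
  \<open>xy = (x \<circ> y)/2\<close>, so this subalgebra contains the subalgebra generated by \<open>X\<close>, and the
  associativity of \<open>\<circ>\<close> becomes that of the product. Power associativity follows because all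
  powers of \<open>X\<close> lie in the generated subalgebra.\<close>

lemma of_nat_prime_nonzero:
  assumes "prime p" and "CHAR('a::{semiring_1,zero_neq_one}) \<noteq> p"
  shows "(of_nat p :: 'a) \<noteq> 0"
  using assms prime_nat_iff CHAR_not_1 by (metis One_nat_def of_nat_eq_0_iff_char_dvd)

lemma gen_subalg_generator: "X \<in> gen_subalg scale m X"
  unfolding gen_subalg_def by blast

lemma prod_in_gen_subalg:
  "a \<in> gen_subalg scale m X \<Longrightarrow> b \<in> gen_subalg scale m X \<Longrightarrow> m a b \<in> gen_subalg scale m X"
  unfolding gen_subalg_def by blast

lemma ppow_in_gen_subalg: "ppow m X (Suc n) \<in> gen_subalg scale m X"
  by (induction n) (auto intro: gen_subalg_generator prod_in_gen_subalg)

lemma ppow_add_if_gen_subalg_assoc: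
  assumes "\<forall>a\<in>gen_subalg scale m X. \<forall>b\<in>gen_subalg scale m X. \<forall>c\<in>gen_subalg scale m X.
             m (m a b) c = m a (m b c)"
  shows "m (ppow m X (Suc i)) (ppow m X (Suc j)) = ppow m X (Suc i + Suc j)"
proof (induction i)
  case 0
  then show ?case by simp
next
  case (Suc i)
  have "m (ppow m X (Suc (Suc i))) (ppow m X (Suc j))
      = m (m X (ppow m X (Suc i))) (ppow m X (Suc j))"
    by simp
  also have "\<dots> = m X (m (ppow m X (Suc i)) (ppow m X (Suc j)))"
    using assms gen_subalg_generator ppow_in_gen_subalg by blast
  also have "\<dots> = ppow m X (Suc (Suc i) + Suc j)"
    using Suc by simp
  finally show ?case .
qed

locale bilinear_algebra = vector_space scale
  for scale :: "'k::field \<Rightarrow> 'p::ab_group_add \<Rightarrow> 'p" +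
  fixes m :: "'p \<Rightarrow> 'p \<Rightarrow> 'p"
  assumes bilinear: "bilinear_prod scale m"
begin

lemma prod_add_right: "m x (a + b) = m x a + m x b"
  and prod_scale_right: "m x (scale c a) = scale c (m x a)"
  and prod_add_left: "m (a + b) y = m a y + m b y"
  and prod_scale_left: "m (scale c a) y = scale c (m a y)"
  using bilinear unfolding bilinear_prod_def linear_iff by auto

lemma prod_zero_right: "m x 0 = 0"
  using prod_add_right[of x 0 0] by simp

lemma prod_zero_left: "m 0 y = 0"
  using prod_add_left[of 0 0 y] by simp

lemma prod_diff_right: "m x (a - b) = m x a - m x b"
proof -
  interpret additive "m x" by standard (rule prod_add_right)
  show ?thesis by (rule diff)
qed

lemma prod_diff_left: "m (a - b) y = m a y - m b y"
proof -
  interpret additive "\<lambda>a. m a y" by standard (rule prod_add_left)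
  show ?thesis by (rule diff)
qed

lemma scale_two: "scale 2 v = v + v"
  using scale_left_distrib[of 1 1 v] by simp

lemma scale_three: "scale 3 v = v + v + v"
  using scale_left_distrib[of 2 1 v] by (simp add: scale_two)

definition sym_prod :: "'p \<Rightarrow> 'p \<Rightarrow> 'p" where
  "sym_prod a b = m a b + m b a"

definition commutator :: "'p \<Rightarrow> 'p \<Rightarrow> 'p" where
  "commutator a b = m a b - m b a"

definition centralizer :: "'p \<Rightarrow> 'p set" where
  "centralizer a = {b. m a b = m b a}"

lemma centralizer_commute: "b \<in> centralizer a \<longleftrightarrow> a \<in> centralizer b"
  unfolding centralizer_def by auto

lemma self_in_centralizer: "a \<in> centralizer a"
  unfolding centralizer_def by simp

lemma subspace_centralizer: "subspace (centralizer a)"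
  unfolding subspace_def centralizer_def
  by (auto simp: prod_zero_left prod_zero_right prod_add_left prod_add_right
      prod_scale_left prod_scale_right)

lemma sym_prod_commuting: "m a b = m b a \<Longrightarrow> sym_prod a b = scale 2 (m a b)"
  unfolding sym_prod_def by (simp add: scale_two)

definition sym_subalg :: "'p \<Rightarrow> 'p set" where
  "sym_subalg X = \<Inter>{U. subspace U \<and> X \<in> U \<and> (\<forall>a\<in>U. \<forall>b\<in>U. sym_prod a b \<in> U)}"

lemma sym_subalg_minimal:
  "subspace U \<Longrightarrow> X \<in> U \<Longrightarrow> (\<forall>a\<in>U. \<forall>b\<in>U. sym_prod a b \<in> U) \<Longrightarrow> sym_subalg X \<subseteq> U"
  unfolding sym_subalg_def by blast

lemma subspace_sym_subalg: "subspace (sym_subalg X)"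
  unfolding sym_subalg_def by (rule subspace_Inter) blast

lemma sym_subalg_generator: "X \<in> sym_subalg X"
  unfolding sym_subalg_def by blast

lemma sym_prod_in_sym_subalg: "a \<in> sym_subalg X \<Longrightarrow> b \<in> sym_subalg X \<Longrightarrow> sym_prod a b \<in> sym_subalg X"
  unfolding sym_subalg_def by blast

end

locale admissible_poisson_algebra = bilinear_algebra scale m
  for scale :: "'k::field \<Rightarrow> 'p::ab_group_add \<Rightarrow> 'p" and m +
  assumes admissible: "\<And>X Y Z. scale 3 (associator m X Y Z) =
      m (m X Z) Y + m (m Y Z) X - m (m Y X) Z - m (m Z X) Y"
    and two_nonzero: "(2::'k) \<noteq> 0"
    and three_nonzero: "(3::'k) \<noteq> 0"
begin

text \<open>The admissibility identity with \<open>scale 3\<close> written as a sum, so that linear combinations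
  of its instances can be normalised by \<open>algebra_simps\<close>.\<close>
definition admissibility_defect :: "'p \<Rightarrow> 'p \<Rightarrow> 'p \<Rightarrow> 'p" where
  "admissibility_defect X Y Z =
     (m (m X Y) Z - m X (m Y Z)) + (m (m X Y) Z - m X (m Y Z)) + (m (m X Y) Z - m X (m Y Z))
     - (m (m X Z) Y + m (m Y Z) X - m (m Y X) Z - m (m Z X) Y)"

lemma admissibility_defect_eq_0: "admissibility_defect X Y Z = 0"
  using admissible[of X Y Z] unfolding admissibility_defect_def associator_def scale_three
  by simp

lemma triple_eq_0_imp_eq_0:
  fixes v :: 'p
  assumes "v + v + v = 0"
  shows "v = 0"
proof -
  have "scale 3 v = 0"
    using assms by (simp only: scale_three)
  then show ?thesis
    using three_nonzero by simp
qed

lemma sym_prod_assoc: "sym_prod (sym_prod a b) c = sym_prod a (sym_prod b c)"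
proof -
  let ?T = "sym_prod (sym_prod a b) c - sym_prod a (sym_prod b c)"
  have "?T + ?T + ?T = admissibility_defect a b c + admissibility_defect a c b
      - admissibility_defect c a b - admissibility_defect c b a"
    unfolding sym_prod_def prod_add_left prod_add_right admissibility_defect_def
    by (simp add: algebra_simps)
  also have "\<dots> = 0"
    by (simp add: admissibility_defect_eq_0)
  finally have "?T = 0"
    by (rule triple_eq_0_imp_eq_0)
  then show ?thesis by simp
qed

lemma commutator_sym_prod:
  "commutator a (sym_prod b c) = sym_prod (commutator a b) c + sym_prod b (commutator a c)"
proof -
  let ?T = "commutator a (sym_prod b c) - (sym_prod (commutator a b) c + sym_prod b (commutator a c))"
  have "?T + ?T + ?T = - (admissibility_defect a b c + admissibility_defect a c b
      - admissibility_defect b a c + admissibility_defect b c a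
      - admissibility_defect c a b + admissibility_defect c b a)"
    unfolding sym_prod_def commutator_def admissibility_defect_def
      prod_add_left prod_add_right prod_diff_left prod_diff_right
    by (simp add: algebra_simps)
  also have "\<dots> = 0"
    by (simp add: admissibility_defect_eq_0)
  finally have "?T = 0"
    by (rule triple_eq_0_imp_eq_0)
  then show ?thesis by simp
qed

lemma sym_prod_in_centralizer:
  assumes "b \<in> centralizer a" and "c \<in> centralizer a"
  shows "sym_prod b c \<in> centralizer a"
proof -
  have "commutator a b = 0" "commutator a c = 0"
    using assms unfolding centralizer_def commutator_def by simp_all
  then have "commutator a (sym_prod b c) = 0"
    by (simp only: commutator_sym_prod) (simp add: sym_prod_def prod_zero_left prod_zero_right)
  then show ?thesis
    unfolding centralizer_def commutator_def by simp
qed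

lemma sym_subalg_subset_centralizer: "X \<in> centralizer a \<Longrightarrow> sym_subalg X \<subseteq> centralizer a"
  by (rule sym_subalg_minimal) (auto intro: subspace_centralizer sym_prod_in_centralizer)

lemma sym_subalg_commute:
  assumes "a \<in> sym_subalg X" and "b \<in> sym_subalg X"
  shows "m a b = m b a"
proof -
  have "a \<in> centralizer X"
    using assms(1) sym_subalg_subset_centralizer self_in_centralizer by blast
  then have "b \<in> centralizer a"
    using assms(2) sym_subalg_subset_centralizer centralizer_commute by blast
  then show ?thesis
    unfolding centralizer_def by simp
qed

lemma prod_in_sym_subalg:
  assumes "a \<in> sym_subalg X" and "b \<in> sym_subalg X"
  shows "m a b \<in> sym_subalg X"
proof -
  have "m a b = scale (1/2) (sym_prod a b)"
    using sym_prod_commuting[OF sym_subalg_commute[OF assms]] two_nonzero by simp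
  then show ?thesis
    using sym_prod_in_sym_subalg[OF assms] subspace_sym_subalg subspace_scale by metis
qed

lemma sym_subalg_assoc:
  assumes a: "a \<in> sym_subalg X" and b: "b \<in> sym_subalg X" and c: "c \<in> sym_subalg X"
  shows "m (m a b) c = m a (m b c)"
proof -
  have "sym_prod (sym_prod a b) c = scale 2 (m (sym_prod a b) c)"
    using a b c by (intro sym_prod_commuting sym_subalg_commute sym_prod_in_sym_subalg)
  also have "\<dots> = scale 2 (scale 2 (m (m a b) c))"
    using a b by (simp add: sym_prod_commuting sym_subalg_commute prod_scale_left)
  finally have left: "sym_prod (sym_prod a b) c = scale 2 (scale 2 (m (m a b) c))" .
  have "sym_prod a (sym_prod b c) = scale 2 (m a (sym_prod b c))"
    using a b c by (intro sym_prod_commuting sym_subalg_commute sym_prod_in_sym_subalg)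
  also have "\<dots> = scale 2 (scale 2 (m a (m b c)))"
    using b c by (simp add: sym_prod_commuting sym_subalg_commute prod_scale_right)
  finally have right: "sym_prod a (sym_prod b c) = scale 2 (scale 2 (m a (m b c)))" .
  have "scale 2 (scale 2 (m (m a b) c)) = scale 2 (scale 2 (m a (m b c)))"
    using left right sym_prod_assoc by metis
  then show ?thesis
    using two_nonzero by (simp del: scale_scale)
qed

lemma gen_subalg_subset_sym_subalg: "gen_subalg scale m X \<subseteq> sym_subalg X"
  unfolding gen_subalg_def
  using subspace_sym_subalg sym_subalg_generator prod_in_sym_subalg by blast

lemma gen_subalg_assoc:
  "\<forall>a\<in>gen_subalg scale m X. \<forall>b\<in>gen_subalg scale m X. \<forall>c\<in>gen_subalg scale m X.
     m (m a b) c = m a (m b c)"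
  using gen_subalg_subset_sym_subalg sym_subalg_assoc by blast

end

theorem mainTheorem3:
  fixes scale :: "'k::field \<Rightarrow> 'p::ab_group_add \<Rightarrow> 'p"
    and m :: "'p \<Rightarrow> 'p \<Rightarrow> 'p"
  assumes "CHAR('k) \<noteq> 2" and "CHAR('k) \<noteq> 3"
    and "admissible_poisson scale m"
  shows "(\<forall>X i j. 1 \<le> i \<longrightarrow> 1 \<le> j \<longrightarrow> m (ppow m X i) (ppow m X j) = ppow m X (i + j))
       \<and> (\<forall>X. \<forall>a\<in>gen_subalg scale m X. \<forall>b\<in>gen_subalg scale m X. \<forall>c\<in>gen_subalg scale m X.
              m (m a b) c = m a (m b c))"
proof -
  have "(2::'k) \<noteq> 0" "(3::'k) \<noteq> 0"
    using of_nat_prime_nonzero[of 2, OF _ assms(1)] of_nat_prime_nonzero[of 3, OF _ assms(2)]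
    by simp_all
  then interpret admissible_poisson_algebra scale m
    using assms(3) unfolding admissible_poisson_def
    by (simp add: admissible_poisson_algebra_def admissible_poisson_algebra_axioms_def
        bilinear_algebra_def bilinear_algebra_axioms_def)
  have "m (ppow m X i) (ppow m X j) = ppow m X (i + j)" if "1 \<le> i" "1 \<le> j" for X i j
    using ppow_add_if_gen_subalg_assoc[OF gen_subalg_assoc, of X "i - 1" "j - 1"] that by simp
  then show ?thesis
    using gen_subalg_assoc by blast
qed

end
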